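(* If $\mu^\ast$ is an upper quasi-density on $\mathbb{H}$, then $\mu^\ast(X)=0$ for every finite $X\subseteq\mathbb{H}$.
   Context: $\mathbb{N}=\{0,1,2,\dots\}$, $\mathbb{N}^+=\{1,2,\dots\}$; $\mathbb{H}$ is one of $\mathbb{Z},\mathbb{N},\mathbb{N}^+$. For $X\subseteq\mathbb{H}$, $k\in\mathbb{N}^+$, $h\in\mathbb{N}$, $k\cdot X+h:=\{kx+h:x\in X\}$. An upper quasi-density on $\mathbb{H}$ is a function $\mu^\ast:\mathcal{P}(\mathbb{H})\to\mathbb{R}$ with $\mu^\ast(\mathbb{H})=1$, $\mu^\ast(X)\le1$ for all $X$, $\mu^\ast(X\cup Y)\le\mu^\ast(X)+\mu^\ast(Y)$ for all $X,Y$, and $\mu^\ast(k\cdot X+h)=\frac1k\mu^\ast(X)$ for all $X\subseteq\mathbb{H}$, $h,k\in\mathbb{N}^+$. *)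

theory Defs
  imports Complex_Main
begin

definition admissible_H :: "int set \<Rightarrow> bool" where
  "admissible_H H \<longleftrightarrow> H = UNIV \<or> H = {0..} \<or> H = {1..}"

definition dil_shift :: "int \<Rightarrow> int set \<Rightarrow> int \<Rightarrow> int set" where
  "dil_shift k X h = (\<lambda>x. k * x + h) ` X"

text \<open>Upper quasi-density on H: a function defined on the power set of H
  (values outside Pow H are irrelevant).\<close>
definition upper_quasi_density :: "int set \<Rightarrow> (int set \<Rightarrow> real) \<Rightarrow> bool" where
  "upper_quasi_density H mu \<longleftrightarrow>
     mu H = 1 \<and>
     (\<forall>X. X \<subseteq> H \<longrightarrow> mu X \<le> 1) \<and>
     (\<forall>X Y. X \<subseteq> H \<longrightarrow> Y \<subseteq> H \<longrightarrow> mu (X \<union> Y) \<le> mu X + mu Y) \<and>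
     (\<forall>X k h. X \<subseteq> H \<longrightarrow> k \<ge> 1 \<longrightarrow> h \<ge> 1 \<longrightarrow> mu (dil_shift k X h) = mu X / real_of_int k)"

end

theory Submission
  imports Defs
begin

text \<open>A singleton has two descriptions, \<open>2\<cdot>{x} + h\<close> and \<open>1\<cdot>{x} + (x + h)\<close>, so scale
  invariance gives \<open>\<mu>\<^sup>*{x} = \<mu>\<^sup>*{x}/2\<close>, i.e. \<open>\<mu>\<^sup>*{x} = 0\<close>; the empty set is handled the
  same way, subadditivity then bounds \<open>\<mu>\<^sup>*\<close> on a finite set by a finite sum of zeros, and
  \<open>\<mu>\<^sup>*(X \<union> X) \<le> 2\<mu>\<^sup>*(X)\<close> shows \<open>\<mu>\<^sup>*\<close> is nonnegative.\<close>

lemma upper_quasi_density_subadditive: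
  assumes "upper_quasi_density H mu" "X \<subseteq> H" "Y \<subseteq> H"
  shows "mu (X \<union> Y) \<le> mu X + mu Y"
  using assms unfolding upper_quasi_density_def by blast

lemma upper_quasi_density_dil_shift:
  assumes "upper_quasi_density H mu" "X \<subseteq> H" "k \<ge> 1" "h \<ge> 1"
  shows "mu (dil_shift k X h) = mu X / real_of_int k"
  using assms unfolding upper_quasi_density_def by blast

lemma upper_quasi_density_nonneg:
  assumes "upper_quasi_density H mu" "X \<subseteq> H"
  shows "mu X \<ge> 0"
  using upper_quasi_density_subadditive[OF assms assms(2)] by simp

lemma upper_quasi_density_empty:
  assumes "upper_quasi_density H mu"
  shows "mu {} = 0"
  using upper_quasi_density_dil_shift[OF assms, of "{}" 2 1] by (simp add: dil_shift_def)

lemma upper_quasi_density_singleton: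
  assumes mu: "upper_quasi_density H mu" and "x \<in> H"
  shows "mu {x} = 0"
proof -
  define h where "h = \<bar>x\<bar> + 1"
  have "dil_shift 2 {x} h = dil_shift 1 {x} (x + h)"
    by (simp add: dil_shift_def)
  moreover have "mu (dil_shift 2 {x} h) = mu {x} / 2"
    using upper_quasi_density_dil_shift[OF mu, of "{x}" 2 h] \<open>x \<in> H\<close> h_def by simp
  moreover have "mu (dil_shift 1 {x} (x + h)) = mu {x}"
    using upper_quasi_density_dil_shift[OF mu, of "{x}" 1 "x + h"] \<open>x \<in> H\<close> h_def by simp
  ultimately show ?thesis by simp
qed

lemma upper_quasi_density_finite_le_zero:
  assumes mu: "upper_quasi_density H mu" and "finite X" "X \<subseteq> H"
  shows "mu X \<le> 0"
  using assms(2,3)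
proof (induction X rule: finite_induct)
  case empty
  then show ?case using upper_quasi_density_empty[OF mu] by simp
next
  case (insert x F)
  have "mu (insert x F) \<le> mu {x} + mu F"
    using upper_quasi_density_subadditive[OF mu, of "{x}" F] insert.prems by simp
  also have "\<dots> \<le> 0"
    using upper_quasi_density_singleton[OF mu] insert by simp
  finally show ?case .
qed

theorem mainTheorem5:
  fixes H :: "int set" and mu :: "int set \<Rightarrow> real" and X :: "int set"
  assumes "admissible_H H"
    and "upper_quasi_density H mu"
    and "finite X" and "X \<subseteq> H"
  shows "mu X = 0"
  using upper_quasi_density_finite_le_zero[OF assms(2-4)]
    upper_quasi_density_nonneg[OF assms(2,4)]
  by simp

end
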